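(* Every finite abelian group is completely $\Phi$-realisable.
   Context: All groups are finite. $\Phi(H)$ denotes the Frattini subgroup of $H$. A finite group $G$ is completely $\Phi$-realisable if there is a finite group $H$ such that: (i) $G\cong \Phi(H)$; (ii) for every subgroup $G_1\leq G$ there exists $H_1\leq H$ with $G_1\cong \Phi(H_1)$; (iii) for every $H_1\leq H$ there exists $G_1\leq G$ with $\Phi(H_1)\cong G_1$. *)

theory Defs
  imports "HOL-Algebra.Algebra"
begin

definition maximal_subgroup :: "'a set \<Rightarrow> ('a, 'b) monoid_scheme \<Rightarrow> bool" where
  "maximal_subgroup M G \<longleftrightarrow> subgroup M G \<and> M \<noteq> carrier G \<and>
     (\<forall>K. subgroup K G \<and> M \<subseteq> K \<longrightarrow> K = M \<or> K = carrier G)"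

text \<open>Frattini subgroup: intersection of all maximal subgroups (the whole group if there are none).\<close>
definition frattini :: "('a, 'b) monoid_scheme \<Rightarrow> 'a set" where
  "frattini G = carrier G \<inter> \<Inter> {M. maximal_subgroup M G}"

definition frattini_group :: "('a, 'b) monoid_scheme \<Rightarrow> ('a, 'b) monoid_scheme" where
  "frattini_group G = G\<lparr>carrier := frattini G\<rparr>"

text \<open>Completely Phi-realisable. The witness group H is taken with carrier in nat;
  every finite group is isomorphic to one of this form.\<close>
definition completely_Phi_realisable :: "('a, 'b) monoid_scheme \<Rightarrow> bool" where
  "completely_Phi_realisable G \<longleftrightarrow>
    (\<exists>H :: nat monoid. group H \<and> finite (carrier H) \<and>
       G \<cong> frattini_group H \<and>
       (\<forall>G1. subgroup G1 G \<longrightarrow>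
          (\<exists>H1. subgroup H1 H \<and> G\<lparr>carrier := G1\<rparr> \<cong> frattini_group (H\<lparr>carrier := H1\<rparr>))) \<and>
       (\<forall>H1. subgroup H1 H \<longrightarrow>
          (\<exists>G1. subgroup G1 G \<and> frattini_group (H\<lparr>carrier := H1\<rparr>) \<cong> G\<lparr>carrier := G1\<rparr>)))"

end

theory Submission
  imports Defs
begin

text \<open>Let \<open>G\<close> be a finite abelian group whose exponent divides \<open>N\<close>, and \<open>r\<close> the product of
  the primes dividing \<open>N\<close>. A maximal subgroup \<open>M\<close> and any \<open>a \<notin> M\<close> generate \<open>G\<close>, so \<open>G/M\<close> is
  cyclic; for a prime \<open>p\<close> dividing the order of \<open>aM\<close>, maximality forces \<open>a\<^sup>p \<in> M\<close>, hence
  \<open>G\<^sup>p \<subseteq> M\<close>. Conversely, if \<open>y\<close> is not a \<open>p\<close>-th power, a subgroup maximal among those containing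
  \<open>G\<^sup>p\<close> but not \<open>y\<close> is a maximal subgroup. So \<open>\<Phi>(G)\<close> is the intersection of the \<open>G\<^sup>p\<close> for
  \<open>p\<close> dividing \<open>N\<close>, which is \<open>G\<^sup>r\<close> as these primes are coprime; the same holds for every subgroup.

  Given \<open>G\<close> of order \<open>n\<close>, take \<open>r\<close> the product of the primes dividing \<open>n\<close>, map
  \<open>F = (\<int>/nr)\<^sup>G\<close> onto \<open>G\<close> with kernel \<open>K\<close>, and put \<open>H = F / K\<^sup>r\<close>. The map \<open>a \<mapsto> a\<^sup>r K\<^sup>r\<close> has
  kernel exactly \<open>K\<close>, since \<open>ra \<equiv> rk (mod nr)\<close> forces \<open>a \<equiv> k (mod n)\<close>; thus \<open>G \<cong> H\<^sup>r = \<Phi>(H)\<close>.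
  As \<open>\<Phi>(H\<^sub>1) = H\<^sub>1\<^sup>r\<close> for all \<open>H\<^sub>1 \<le> H\<close>, and the subgroups of \<open>H\<^sup>r\<close> are exactly the groups \<open>H\<^sub>1\<^sup>r\<close>,
  the power map matches the subgroups of \<open>G\<close> with the Frattini subgroups of subgroups of \<open>H\<close>.\<close>

abbreviation powers :: "('a, 'b) monoid_scheme \<Rightarrow> nat \<Rightarrow> 'a set" where
  "powers G k \<equiv> (\<lambda>x. x [^]\<^bsub>G\<^esub> k) ` carrier G"

lemma (in comm_group) group_hom_nat_pow: "group_hom G G (\<lambda>x. x [^] (k::nat))"
  by unfold_locales (auto intro!: homI simp: nat_pow_distrib)

lemma (in group_hom) subgroup_vimage:
  assumes "subgroup K H"
  shows "subgroup (carrier G \<inter> h -` K) G"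
proof (rule G.subgroupI)
  show "carrier G \<inter> h -` K \<noteq> {}"
    using subgroup.one_closed[OF assms] by auto
qed (auto simp: subgroup.m_closed[OF assms] subgroup.m_inv_closed[OF assms])

lemma (in group_hom) nat_pow_eq_one_image:
  assumes "h ` carrier G = carrier H" "\<forall>x\<in>carrier G. x [^] (N::nat) = \<one>"
  shows "\<forall>y\<in>carrier H. y [^]\<^bsub>H\<^esub> N = \<one>\<^bsub>H\<^esub>"
proof
  fix y assume "y \<in> carrier H"
  then obtain x where "x \<in> carrier G" "y = h x"
    using assms(1) by blast
  then show "y [^]\<^bsub>H\<^esub> N = \<one>\<^bsub>H\<^esub>"
    using assms(2) by (simp flip: hom_nat_pow)
qed

lemma (in comm_group) subgroup_comm_group:
  assumes "subgroup H G"
  shows "comm_group (G\<lparr>carrier := H\<rparr>)"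
  using subgroup_imp_group[OF assms] subgroup.subset[OF assms]
  by (auto intro!: group.group_comm_groupI m_comm)

lemma (in group) int_pow_nat_pow:
  assumes "x \<in> carrier G"
  shows "(x [^] (k::int)) [^] (n::nat) = x [^] (k * int n)"
  by (metis assms int_pow_int int_pow_pow)

lemma (in group) nat_pow_int_pow:
  assumes "x \<in> carrier G"
  shows "(x [^] (n::nat)) [^] (k::int) = x [^] (int n * k)"
  by (metis assms int_pow_int int_pow_pow)

lemma (in group) int_pow_eq_if_mod_eq:
  assumes "x \<in> carrier G" "x [^] (n::nat) = \<one>" "i mod int n = j mod int n"
  shows "x [^] (i::int) = x [^] j"
proof -
  have "int (ord x) dvd int n"
    using assms(1,2) pow_eq_id by simp
  moreover have "int n dvd j - i"
    using assms(3) by (metis mod_eq_dvd_iff)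
  ultimately show ?thesis
    using assms(1) int_pow_eq dvd_trans by blast
qed

lemma (in group) int_pow_mem_normal_iff_dvd:
  assumes M: "M \<lhd> G" and a: "a \<in> carrier G"
  obtains k :: nat where "\<And>t::int. a [^] t \<in> M \<longleftrightarrow> int k dvd t"
proof -
  interpret normal M G by (rule M)
  interpret quotient: group "G Mod M" by (rule factorgroup_is_group)
  interpret coset: group_hom G "G Mod M" "\<lambda>x. M #> x"
    by unfold_locales (rule r_coset_hom_Mod)
  have "a [^] t \<in> M \<longleftrightarrow> (M #> a) [^]\<^bsub>G Mod M\<^esub> t = \<one>\<^bsub>G Mod M\<^esub>" for t :: int
    using coset_join1[OF _ _ subgroup_axioms] coset_join2[OF _ subgroup_axioms] a
    by (auto simp flip: coset.hom_int_pow)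
  then show thesis
    using that quotient.int_pow_eq_id a by (simp add: carrier_FactGroup)
qed

section \<open>The Frattini subgroup of a finite abelian group\<close>

lemma (in group) mem_set_mult_generate_iff:
  assumes "b \<in> carrier G"
  shows "x \<in> M <#> generate G {b} \<longleftrightarrow> (\<exists>m\<in>M. \<exists>k::int. x = m \<otimes> b [^] k)"
  by (auto simp: set_mult_def generate_pow[OF assms])

lemma (in comm_group) set_mult_generate_subgroup:
  assumes "subgroup M G" "b \<in> carrier G"
  shows "subgroup (M <#> generate G {b}) G"
  using mult_subgroups[OF assms(1) generate_is_subgroup] assms(2) by simp

lemma (in group) insert_subset_set_mult_generate:
  assumes "subgroup M G" "b \<in> carrier G"
  shows "insert b M \<subseteq> M <#> generate G {b}"
proof -
  have "m = m \<otimes> b [^] (0::int)" if "m \<in> M" for m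
    using that subgroup.subset[OF assms(1)] by auto
  moreover have "b = \<one> \<otimes> b [^] (1::int)"
    using assms(2) by simp
  ultimately show ?thesis
    using subgroup.one_closed[OF assms(1)] mem_set_mult_generate_iff[OF assms(2)] by blast
qed

lemma (in comm_group) maximal_subgroup_set_mult_generate:
  assumes M: "maximal_subgroup M G" and b: "b \<in> carrier G" "b \<notin> M"
  shows "M <#> generate G {b} = carrier G"
  using M set_mult_generate_subgroup[of M b] insert_subset_set_mult_generate[of M b] b
  unfolding maximal_subgroup_def by blast

text \<open>Here \<open>k\<close> is the order of \<open>aM\<close> in \<open>G/M\<close>, and \<open>p\<close> a prime factor of it.\<close>

lemma (in comm_group) maximal_subgroup_prime_pow_mem:
  assumes M: "maximal_subgroup M G" and a: "a \<in> carrier G" "a \<notin> M"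
    and k: "\<And>t::int. a [^] t \<in> M \<longleftrightarrow> int k dvd t"
    and p: "Factorial_Ring.prime p" "p dvd k"
  shows "a [^] p \<in> M"
proof (rule ccontr)
  have Ms: "subgroup M G"
    using M unfolding maximal_subgroup_def by blast
  assume "a [^] p \<notin> M"
  then have "a \<in> M <#> generate G {a [^] p}"
    using maximal_subgroup_set_mult_generate[OF M] a by blast
  then obtain m j where m: "m \<in> M" and amj: "a = m \<otimes> (a [^] p) [^] (j::int)"
    unfolding mem_set_mult_generate_iff[OF nat_pow_closed[OF a(1)]] by blast
  have "a [^] (1 - int p * j) = a \<otimes> inv ((a [^] p) [^] j)"
    using a by (simp add: int_pow_diff nat_pow_int_pow)
  also have "\<dots> = m"
    using inv_solve_right[of m a "(a [^] p) [^] j"] amj m subgroup.subset[OF Ms] a by auto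
  finally have "int p dvd 1 - int p * j"
    using k m p(2) by (metis dvd_trans int_dvd_int_iff)
  then have "p dvd 1"
    by (metis dvd_add_right_iff dvd_mult2 dvd_refl int_dvd_int_iff diff_add_cancel of_nat_1)
  then show False
    using p(1) by simp
qed

lemma (in comm_group) powers_subset_maximal_subgroup:
  assumes M: "maximal_subgroup M G" and a: "a \<in> carrier G" "a \<notin> M" and ap: "a [^] p \<in> M"
  shows "powers G p \<subseteq> M"
proof (rule image_subsetI)
  have Ms: "subgroup M G"
    using M unfolding maximal_subgroup_def by blast
  fix x assume "x \<in> carrier G"
  then have "x \<in> M <#> generate G {a}"
    using maximal_subgroup_set_mult_generate[OF M a] by simp
  then obtain m j where m: "m \<in> M" and xmj: "x = m \<otimes> a [^] (j::int)"
    unfolding mem_set_mult_generate_iff[OF a(1)] by blast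
  have "x [^] p = m [^] p \<otimes> (a [^] p) [^] j"
    using xmj m a subgroup.subset[OF Ms]
    by (auto simp: nat_pow_distrib int_pow_nat_pow nat_pow_int_pow mult.commute)
  then show "x [^] p \<in> M"
    using subgroup_int_pow_closed[OF Ms m, of "int p"] subgroup_int_pow_closed[OF Ms ap]
    by (simp add: int_pow_int subgroup.m_closed[OF Ms])
qed

lemma (in comm_group) maximal_subgroup_contains_powers:
  assumes M: "maximal_subgroup M G" and N: "N > 0" and exN: "\<forall>x\<in>carrier G. x [^] (N::nat) = \<one>"
  shows "\<exists>p\<in>prime_factors N. powers G p \<subseteq> M"
proof -
  have Ms: "subgroup M G" and "M \<noteq> carrier G"
    using M unfolding maximal_subgroup_def by auto
  then obtain a where a: "a \<in> carrier G" "a \<notin> M"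
    using subgroup.subset by blast
  obtain k where k: "\<And>t::int. a [^] t \<in> M \<longleftrightarrow> int k dvd t"
    using int_pow_mem_normal_iff_dvd[OF subgroup_imp_normal[OF Ms] a(1)] by blast
  have "int k dvd int N"
    using k[of "int N"] exN a subgroup.one_closed[OF Ms] by (simp add: int_pow_int)
  moreover have "k \<noteq> 1"
    using k[of 1] a by auto
  then obtain p where p: "Factorial_Ring.prime p" "p dvd k"
    using prime_factor_nat by blast
  ultimately have "p \<in> prime_factors N"
    using N by (auto simp: in_prime_factors_iff intro: dvd_trans)
  moreover have "powers G p \<subseteq> M"
    using powers_subset_maximal_subgroup[OF M a maximal_subgroup_prime_pow_mem[OF M a k p]] .
  ultimately show ?thesis
    by blast
qed

lemma (in comm_group) mem_subgroup_if_coprime_pow_mem: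
  assumes K: "subgroup K G" "powers G p \<subseteq> K" and p: "Factorial_Ring.prime p"
    and z: "z \<in> carrier G" "z [^] (j::int) \<in> K" "\<not> int p dvd j"
  shows "z \<in> K"
proof -
  have "coprime (int p) j"
    using p z(3) by (simp add: prime_imp_coprime)
  then have "gcd (int p) j = 1"
    by simp
  then obtain v u where uv: "v * int p + u * j = 1"
    using bezout_int[of "int p" j] by auto
  have "z = z [^] (u * j + v * int p)"
    using z uv by (simp add: add.commute)
  also have "\<dots> = (z [^] j) [^] u \<otimes> (z [^] v) [^] p"
    using z by (simp add: int_pow_mult int_pow_pow int_pow_nat_pow mult.commute)
  finally have "z = (z [^] j) [^] u \<otimes> (z [^] v) [^] p" .
  moreover have "(z [^] v) [^] p \<in> K"
    using K(2) z int_pow_closed by blast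
  ultimately show ?thesis
    using z(2) subgroup.m_closed[OF K(1)] subgroup_int_pow_closed[OF K(1)] by metis
qed

lemma (in comm_group) maximal_subgroupI_avoiding:
  assumes p: "Factorial_Ring.prime p" and M: "subgroup M G" "powers G p \<subseteq> M"
    and y: "y \<in> carrier G" "y \<notin> M"
    and larger: "\<And>K. subgroup K G \<Longrightarrow> M \<subset> K \<Longrightarrow> y \<in> K"
  shows "maximal_subgroup M G"
proof -
  have "z \<in> K" if K: "subgroup K G" "M \<subset> K" and z: "z \<in> carrier G" "z \<notin> M" for K z
  proof -
    have "y \<in> M <#> generate G {z}"
      using larger set_mult_generate_subgroup[OF M(1) z(1)]
        insert_subset_set_mult_generate[OF M(1) z(1)] z(2) by blast
    then obtain m j where m: "m \<in> M" and ymj: "y = m \<otimes> z [^] (j::int)"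
      unfolding mem_set_mult_generate_iff[OF z(1)] by blast
    have mc: "m \<in> carrier G"
      using m M(1) subgroup.subset by blast
    have "\<not> int p dvd j"
    proof
      assume "int p dvd j"
      then obtain i where "j = i * int p"
        by (metis dvdE mult.commute)
      then have "z [^] j = (z [^] i) [^] p"
        using z(1) by (simp add: int_pow_nat_pow)
      then have "z [^] j \<in> M"
        using M(2) z(1) by auto
      then show False
        using ymj m y(2) subgroup.m_closed[OF M(1)] by auto
    qed
    moreover have "z [^] j = inv m \<otimes> y"
      using inv_solve_left[of "z [^] j" m y] ymj mc z(1) y(1) by simp
    then have "z [^] j \<in> K"
      using m K larger[OF K] subgroup.m_closed[OF K(1)] subgroup.m_inv_closed[OF K(1)] by auto
    ultimately show "z \<in> K"
      using mem_subgroup_if_coprime_pow_mem[OF K(1) _ p z(1)] M(2) K(2) by blast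
  qed
  then have "K = M \<or> K = carrier G" if "subgroup K G \<and> M \<subseteq> K" for K
    using that subgroup.subset[of K G] by blast
  moreover have "M \<noteq> carrier G"
    using y by blast
  ultimately show ?thesis
    unfolding maximal_subgroup_def using M(1) by blast
qed

lemma (in comm_group) ex_maximal_subgroup_not_mem:
  assumes fin: "finite (carrier G)" and p: "Factorial_Ring.prime p"
    and y: "y \<in> carrier G" "y \<notin> powers G p"
  shows "\<exists>M. maximal_subgroup M G \<and> y \<notin> M"
proof -
  interpret pow: group_hom G G "\<lambda>x. x [^] p" by (rule group_hom_nat_pow)
  define S where "S = {M. subgroup M G \<and> powers G p \<subseteq> M \<and> y \<notin> M}"
  have "S \<subseteq> Pow (carrier G)"
    unfolding S_def using subgroup.subset by blast
  then have "finite S"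
    using fin finite_subset by blast
  moreover have "powers G p \<in> S"
    unfolding S_def using pow.img_is_subgroup y by blast
  ultimately obtain M where "M \<in> S" and M_max: "\<And>K. K \<in> S \<Longrightarrow> M \<subseteq> K \<Longrightarrow> M = K"
    using finite_has_maximal[of S] by blast
  then have M: "subgroup M G" "powers G p \<subseteq> M" and yM: "y \<notin> M"
    unfolding S_def by auto
  have "y \<in> K" if "subgroup K G" "M \<subset> K" for K
    using M_max[of K] M that unfolding S_def by blast
  then have "maximal_subgroup M G"
    by (rule maximal_subgroupI_avoiding[OF p M y(1) yM])
  then show ?thesis
    using yM by blast
qed

lemma (in comm_group) powers_Int_coprime:
  assumes ab: "coprime a b"
  shows "powers G a \<inter> powers G b = powers G (a * b)"
proof
  show "powers G (a * b) \<subseteq> powers G a \<inter> powers G b"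
  proof (rule subsetI, elim imageE)
    fix x y assume y: "y \<in> carrier G" and "x = y [^] (a * b)"
    then have "x = (y [^] b) [^] a" "x = (y [^] a) [^] b"
      by (simp_all add: nat_pow_pow mult.commute)
    then show "x \<in> powers G a \<inter> powers G b"
      using y by blast
  qed
  show "powers G a \<inter> powers G b \<subseteq> powers G (a * b)"
  proof
    fix x assume "x \<in> powers G a \<inter> powers G b"
    then obtain y z where y: "y \<in> carrier G" "x = y [^] a" and z: "z \<in> carrier G" "x = z [^] b"
      by blast
    have "gcd (int a) (int b) = 1"
      using ab by (simp flip: coprime_iff_gcd_eq_1)
    then obtain u v where uv: "u * int a + v * int b = 1"
      using bezout_int[of "int a" "int b"] by auto
    have "x = x [^] (u * int a) \<otimes> x [^] (v * int b)"
      using y uv by (simp flip: int_pow_mult)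
    also have "x [^] (u * int a) = (z [^] u) [^] (a * b)"
      unfolding z(2) using z(1) by (simp add: nat_pow_int_pow int_pow_nat_pow ac_simps)
    also have "x [^] (v * int b) = (y [^] v) [^] (a * b)"
      unfolding y(2) using y(1) by (simp add: nat_pow_int_pow int_pow_nat_pow ac_simps)
    also have "(z [^] u) [^] (a * b) \<otimes> (y [^] v) [^] (a * b) = (z [^] u \<otimes> y [^] v) [^] (a * b)"
      using y(1) z(1) by (simp add: nat_pow_distrib)
    finally show "x \<in> powers G (a * b)"
      using y z by blast
  qed
qed

lemma (in comm_group) Inter_powers_primes:
  assumes "finite S" "\<forall>p\<in>S. Factorial_Ring.prime p"
  shows "carrier G \<inter> (\<Inter>p\<in>S. powers G p) = powers G (\<Prod>S)"
  using assms
proof (induction S rule: finite_induct)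
  case empty
  then show ?case by auto
next
  case (insert q S)
  have "coprime q (\<Prod>S)"
    using insert by (metis insertCI prod_coprime_right primes_coprime)
  have "carrier G \<inter> (\<Inter>p\<in>insert q S. powers G p)
      = powers G q \<inter> (carrier G \<inter> (\<Inter>p\<in>S. powers G p))"
    by auto
  also have "\<dots> = powers G q \<inter> powers G (\<Prod>S)"
    using insert by simp
  also have "\<dots> = powers G (\<Prod>(insert q S))"
    using insert.hyps \<open>coprime q (\<Prod>S)\<close> by (simp add: powers_Int_coprime)
  finally show ?case .
qed

theorem (in comm_group) frattini_eq_powers:
  assumes fin: "finite (carrier G)" and N: "N > 0" and exN: "\<forall>x\<in>carrier G. x [^] (N::nat) = \<one>"
  shows "frattini G = powers G (\<Prod>(prime_factors N))"
proof -
  have "(\<forall>M. maximal_subgroup M G \<longrightarrow> y \<in> M) \<longleftrightarrow> (\<forall>p\<in>prime_factors N. y \<in> powers G p)"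
    if y: "y \<in> carrier G" for y
    using maximal_subgroup_contains_powers[OF _ N exN] ex_maximal_subgroup_not_mem[OF fin _ y]
    by (meson in_prime_factors_imp_prime subsetD)
  then have "frattini G = carrier G \<inter> (\<Inter>p\<in>prime_factors N. powers G p)"
    unfolding frattini_def by blast
  also have "\<dots> = powers G (\<Prod>(prime_factors N))"
    by (rule Inter_powers_primes) auto
  finally show ?thesis .
qed

lemma (in comm_group) frattini_subgroup_eq:
  assumes fin: "finite (carrier G)" and N: "N > 0" and exN: "\<forall>x\<in>carrier G. x [^] (N::nat) = \<one>"
    and K: "subgroup K G"
  shows "frattini (G\<lparr>carrier := K\<rparr>) = (\<lambda>x. x [^] (\<Prod>(prime_factors N))) ` K"
proof -
  interpret K: comm_group "G\<lparr>carrier := K\<rparr>"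
    by (rule subgroup_comm_group[OF K])
  have pow_eq: "x [^]\<^bsub>G\<lparr>carrier := K\<rparr>\<^esub> n = x [^] n" for x and n :: nat
    by (rule nat_pow_consistent[symmetric])
  have "frattini (G\<lparr>carrier := K\<rparr>) = powers (G\<lparr>carrier := K\<rparr>) (\<Prod>(prime_factors N))"
    using fin exN N subgroup.subset[OF K]
    by (intro K.frattini_eq_powers) (auto simp: pow_eq intro: finite_subset)
  then show ?thesis
    by (simp add: pow_eq)
qed

section \<open>Finite abelian groups as groups of \<open>r\<close>-th powers\<close>

abbreviation zmod_power :: "'a set \<Rightarrow> nat \<Rightarrow> ('a \<Rightarrow> int) monoid" where
  "zmod_power I N \<equiv> product_group I (\<lambda>_. integer_mod_group N)"

lemma comm_group_zmod_power: "comm_group (zmod_power I N)"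
  by (rule group.group_comm_groupI) (auto simp: add.commute)

lemma finite_zmod_power: "finite I \<Longrightarrow> N > 0 \<Longrightarrow> finite (carrier (zmod_power I N))"
  by (simp add: carrier_integer_mod_group finite_PiE)

lemma zmod_power_nat_pow:
  "f [^]\<^bsub>zmod_power I N\<^esub> (k::nat) = (\<lambda>i\<in>I. (int k * f i) mod int N)"
proof (induction k)
  case (Suc k)
  then show ?case
    by (auto simp: fun_eq_iff mod_add_right_eq algebra_simps)
qed simp

definition lincomb :: "('a, 'b) monoid_scheme \<Rightarrow> ('a \<Rightarrow> int) \<Rightarrow> 'a" where
  "lincomb G f = (\<Otimes>\<^bsub>G\<^esub> g\<in>carrier G. g [^]\<^bsub>G\<^esub> f g)"

context comm_group
begin

lemma lincomb_hom:
  assumes "\<forall>x\<in>carrier G. x [^] (N::nat) = \<one>"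
  shows "lincomb G \<in> hom (zmod_power (carrier G) N) G"
proof (rule homI)
  fix f h assume "f \<in> carrier (zmod_power (carrier G) N)" "h \<in> carrier (zmod_power (carrier G) N)"
  have "lincomb G (f \<otimes>\<^bsub>zmod_power (carrier G) N\<^esub> h) = (\<Otimes>g\<in>carrier G. g [^] f g \<otimes> g [^] h g)"
    unfolding lincomb_def
  proof (rule finprod_cong')
    fix g assume g: "g \<in> carrier G"
    then have "g [^] ((f g + h g) mod int N) = g [^] (f g + h g)"
      using assms by (intro int_pow_eq_if_mod_eq) auto
    then show "g [^] (f \<otimes>\<^bsub>zmod_power (carrier G) N\<^esub> h) g = g [^] f g \<otimes> g [^] h g"
      using g by (simp add: int_pow_mult)
  qed auto
  then show "lincomb G (f \<otimes>\<^bsub>zmod_power (carrier G) N\<^esub> h) = lincomb G f \<otimes> lincomb G h"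
    unfolding lincomb_def by (simp add: finprod_multf)
qed (simp add: lincomb_def)

lemma lincomb_surj:
  assumes fin: "finite (carrier G)" and exN: "\<forall>x\<in>carrier G. x [^] (N::nat) = \<one>"
  shows "lincomb G ` carrier (zmod_power (carrier G) N) = carrier G"
proof
  show "lincomb G ` carrier (zmod_power (carrier G) N) \<subseteq> carrier G"
    by (auto simp: lincomb_def)
  show "carrier G \<subseteq> lincomb G ` carrier (zmod_power (carrier G) N)"
  proof
    fix a assume a: "a \<in> carrier G"
    define \<delta> where "\<delta> = (\<lambda>g\<in>carrier G. if g = a then 1 mod int N else 0)"
    have "g [^] \<delta> g = (if a = g then g else \<one>)" if g: "g \<in> carrier G" for g
      using g a exN int_pow_eq_if_mod_eq[of g N "1 mod int N" 1] by (auto simp: \<delta>_def)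
    then have "lincomb G \<delta> = (\<Otimes>g\<in>carrier G. if a = g then g else \<one>)"
      unfolding lincomb_def by (intro finprod_cong') auto
    also have "\<dots> = a"
      using finprod_singleton[OF a fin, of "\<lambda>x. x"] a by simp
    finally have "lincomb G \<delta> = a" .
    moreover have "\<delta> \<in> carrier (zmod_power (carrier G) N)"
      by (auto simp: \<delta>_def carrier_integer_mod_group)
    ultimately show "a \<in> lincomb G ` carrier (zmod_power (carrier G) N)"
      by force
  qed
qed

lemma lincomb_eq_if_pow_eq:
  assumes exn: "\<forall>x\<in>carrier G. x [^] (n::nat) = \<one>" and r: "r > 0"
    and eq: "f [^]\<^bsub>zmod_power (carrier G) (n * r)\<^esub> r = k [^]\<^bsub>zmod_power (carrier G) (n * r)\<^esub> r"
  shows "lincomb G f = lincomb G k"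
  unfolding lincomb_def
proof (rule finprod_cong')
  fix g assume g: "g \<in> carrier G"
  have "(int r * f g) mod (int r * int n) = (int r * k g) mod (int r * int n)"
    using fun_cong[OF eq, of g] g by (simp add: zmod_power_nat_pow mult.commute)
  then have "f g mod int n = k g mod int n"
    using r by (simp add: mod_mult_mult1)
  then show "g [^] f g = g [^] k g"
    using g exn int_pow_eq_if_mod_eq by blast
qed auto

end

lemma iso_image_of_equal_kernels:
  assumes \<pi>: "group_hom F G \<pi>" "\<pi> ` carrier F = carrier G"
    and \<phi>: "group_hom F H \<phi>" and ker: "kernel F G \<pi> = kernel F H \<phi>"
  shows "G \<cong> H\<lparr>carrier := \<phi> ` carrier F\<rparr>"
proof -
  interpret \<pi>: group_hom F G \<pi> by (rule \<pi>(1))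
  interpret \<phi>: group_hom F H \<phi> by (rule \<phi>)
  have "group_hom F (H\<lparr>carrier := \<phi> ` carrier F\<rparr>) \<phi>"
    using \<phi>.H.subgroup_imp_group[OF \<phi>.img_is_subgroup]
    by (auto simp: group_hom_def group_hom_axioms_def intro: homI)
  then have "F Mod kernel F H \<phi> \<cong> H\<lparr>carrier := \<phi> ` carrier F\<rparr>"
    using group_hom.FactGroup_iso[of F "H\<lparr>carrier := \<phi> ` carrier F\<rparr>" \<phi>]
    by (simp add: kernel_def)
  moreover have "G \<cong> F Mod kernel F H \<phi>"
    using \<pi>.FactGroup_iso[OF \<pi>(2)] ker normal.factorgroup_is_group[OF \<pi>.normal_kernel]
    by (simp add: group.iso_sym)
  ultimately show ?thesis
    using iso_trans by blast
qed

lemma (in normal) FactGroup_nat_pow_eq_one: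
  assumes "\<forall>x\<in>carrier G. x [^] (N::nat) = \<one>"
  shows "\<forall>x\<in>carrier (G Mod H). x [^]\<^bsub>G Mod H\<^esub> N = \<one>\<^bsub>G Mod H\<^esub>"
proof -
  interpret coset: group_hom G "G Mod H" "\<lambda>a. H #> a"
    by (simp add: group_hom_def group_hom_axioms_def factorgroup_is_group r_coset_hom_Mod is_group)
  show ?thesis
    using coset.nat_pow_eq_one_image[OF _ assms] by (simp add: carrier_FactGroup)
qed

lemma iso_powers_FactGroup:
  assumes F: "comm_group F" and \<pi>: "group_hom F G \<pi>" "\<pi> ` carrier F = carrier G"
    and root: "\<And>a k. a \<in> carrier F \<Longrightarrow> k \<in> kernel F G \<pi> \<Longrightarrow> a [^]\<^bsub>F\<^esub> r = k [^]\<^bsub>F\<^esub> r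
      \<Longrightarrow> \<pi> a = \<one>\<^bsub>G\<^esub>"
  defines "H \<equiv> F Mod ((\<lambda>k. k [^]\<^bsub>F\<^esub> (r::nat)) ` kernel F G \<pi>)"
  shows "G \<cong> H\<lparr>carrier := powers H r\<rparr>"
proof -
  interpret F: comm_group F by (rule F)
  interpret \<pi>: group_hom F G \<pi> by (rule \<pi>(1))
  interpret pow: group_hom F F "\<lambda>x. x [^]\<^bsub>F\<^esub> r" by (rule F.group_hom_nat_pow)
  define R where "R = (\<lambda>k. k [^]\<^bsub>F\<^esub> r) ` kernel F G \<pi>"
  have R: "subgroup R F"
    unfolding R_def by (rule pow.subgroup_img_is_subgroup[OF \<pi>.subgroup_kernel])
  interpret R: normal R F by (rule F.subgroup_imp_normal[OF R])
  interpret coset: group_hom F H "\<lambda>a. R #>\<^bsub>F\<^esub> a"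
    unfolding H_def R_def[symmetric]
    by (simp add: group_hom_def group_hom_axioms_def R.factorgroup_is_group R.r_coset_hom_Mod)
  define \<phi> where "\<phi> = (\<lambda>a. R #>\<^bsub>F\<^esub> a) \<circ> (\<lambda>x. x [^]\<^bsub>F\<^esub> r)"
  have \<phi>: "group_hom F H \<phi>"
    unfolding \<phi>_def using hom_compose[OF pow.homh coset.homh]
    by (simp add: group_hom_def group_hom_axioms_def coset.H.is_group)
  have "\<phi> a = \<one>\<^bsub>H\<^esub> \<longleftrightarrow> a \<in> kernel F G \<pi>" if a: "a \<in> carrier F" for a
  proof -
    have "\<phi> a = \<one>\<^bsub>H\<^esub> \<longleftrightarrow> a [^]\<^bsub>F\<^esub> r \<in> R"
      using a F.coset_join1[OF _ _ R] F.coset_join2[OF _ R] by (auto simp: \<phi>_def H_def R_def)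
    also have "\<dots> \<longleftrightarrow> a \<in> kernel F G \<pi>"
      using a root unfolding R_def by (auto simp: kernel_def)
    finally show ?thesis .
  qed
  then have "kernel F G \<pi> = kernel F H \<phi>"
    by (auto simp: kernel_def)
  moreover have "\<phi> ` carrier F = powers H r"
  proof -
    have "\<phi> ` carrier F = (\<lambda>a. (R #>\<^bsub>F\<^esub> a) [^]\<^bsub>H\<^esub> r) ` carrier F"
      by (auto simp: \<phi>_def coset.hom_nat_pow)
    also have "\<dots> = powers H r"
      by (simp add: image_image H_def R_def carrier_FactGroup)
    finally show ?thesis .
  qed
  ultimately show ?thesis
    using iso_image_of_equal_kernels[OF \<pi> \<phi>] by simp
qed

lemma (in comm_group) ex_powers_iso:
  assumes fin: "finite (carrier G)" and n: "n > 0" and exn: "\<forall>x\<in>carrier G. x [^] (n::nat) = \<one>"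
    and r: "r > (0::nat)"
  obtains H :: "('a \<Rightarrow> int) set monoid"
  where "comm_group H" "finite (carrier H)" "\<forall>x\<in>carrier H. x [^]\<^bsub>H\<^esub> (n * r) = \<one>\<^bsub>H\<^esub>"
    "G \<cong> H\<lparr>carrier := powers H r\<rparr>"
proof -
  define F where "F = zmod_power (carrier G) (n * r)"
  interpret F: comm_group F
    unfolding F_def by (rule comm_group_zmod_power)
  have exN: "\<forall>x\<in>carrier G. x [^] (n * r) = \<one>"
    using exn by (simp add: nat_pow_pow[symmetric])
  interpret \<pi>: group_hom F G "lincomb G"
    unfolding F_def using lincomb_hom[OF exN]
    by (simp add: group_hom_def group_hom_axioms_def F.is_group[unfolded F_def] is_group)
  have \<pi>_surj: "lincomb G ` carrier F = carrier G"
    unfolding F_def by (rule lincomb_surj[OF fin exN])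
  define R where "R = (\<lambda>k. k [^]\<^bsub>F\<^esub> r) ` kernel F G (lincomb G)"
  have R: "subgroup R F"
    unfolding R_def
    by (rule group_hom.subgroup_img_is_subgroup[OF F.group_hom_nat_pow \<pi>.subgroup_kernel])
  interpret R: normal R F by (rule F.subgroup_imp_normal[OF R])
  show thesis
  proof
    show "comm_group (F Mod R)"
      by (rule F.abelian_FactGroup[OF R])
    show "finite (carrier (F Mod R))"
      using finite_zmod_power[OF fin] n r by (simp add: F_def carrier_FactGroup)
    show "\<forall>x\<in>carrier (F Mod R). x [^]\<^bsub>F Mod R\<^esub> (n * r) = \<one>\<^bsub>F Mod R\<^esub>"
      by (rule R.FactGroup_nat_pow_eq_one) (auto simp: F_def zmod_power_nat_pow)
    show "G \<cong> (F Mod R)\<lparr>carrier := powers (F Mod R) r\<rparr>"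
      unfolding R_def
    proof (rule iso_powers_FactGroup[OF F.comm_group_axioms \<pi>.group_hom_axioms \<pi>_surj])
      fix a k assume "a \<in> carrier F" "k \<in> kernel F G (lincomb G)" "a [^]\<^bsub>F\<^esub> r = k [^]\<^bsub>F\<^esub> r"
      then show "lincomb G a = \<one>"
        using lincomb_eq_if_pow_eq[OF exn r, of a k] by (simp add: F_def kernel_def)
    qed
  qed
qed

lemma prime_factors_mult_prod_prime_factors:
  assumes "(n::nat) > 0"
  shows "prime_factors (n * \<Prod>(prime_factors n)) = prime_factors n"
proof -
  have "prime_factors (\<Prod>(prime_factors n)) = prime_factors n"
    using prime_factors_prod[of "prime_factors n" id]
    by (auto simp: prime_prime_factors in_prime_factors_imp_prime)
  then show ?thesis
    using assms prime_factors_product[of n "\<Prod>(prime_factors n)"]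
    by (auto simp: prod_zero_iff)
qed

lemma ex_iso_nat_monoid:
  assumes "group H'" "finite (carrier H')"
  obtains H :: "nat monoid" and h where "h \<in> iso H' H" "group H"
proof -
  interpret H': group H' by (rule assms(1))
  obtain h :: "'a \<Rightarrow> nat" where "inj_on h (carrier H')"
    using ex_bij_betw_finite_nat[OF assms(2)] bij_betw_def by blast
  define H :: "nat monoid" where "H = \<lparr>carrier = h ` carrier H',
      monoid.mult = \<lambda>x y. h (inv_into (carrier H') h x \<otimes>\<^bsub>H'\<^esub> inv_into (carrier H') h y),
      one = h \<one>\<^bsub>H'\<^esub>\<rparr>"
  have "h \<in> hom H' H"
    by (rule homI) (simp_all add: H_def \<open>inj_on h (carrier H')\<close>)
  then have "h \<in> iso H' H"
    using \<open>inj_on h (carrier H')\<close> by (simp add: iso_def bij_betw_def H_def)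
  moreover have "group H"
    using H'.iso_imp_img_group[OF \<open>h \<in> iso H' H\<close>] by (simp add: H_def)
  ultimately show thesis
    by (rule that)
qed

lemma (in comm_group) iso_powers:
  assumes h: "h \<in> iso G H" and H: "group H"
  shows "G\<lparr>carrier := powers G k\<rparr> \<cong> H\<lparr>carrier := powers H k\<rparr>"
proof -
  interpret pow: group_hom G G "\<lambda>x. x [^] k" by (rule group_hom_nat_pow)
  have "restrict h (powers G k) \<in> iso (G\<lparr>carrier := powers G k\<rparr>) (H\<lparr>carrier := h ` powers G k\<rparr>)"
    by (rule iso_restrict[OF h is_group H pow.img_is_subgroup])
  moreover have "h ` powers G k = powers H k"
  proof -
    have "h ` powers G k = (\<lambda>x. h x [^]\<^bsub>H\<^esub> k) ` carrier G"
      using h H by (auto simp: image_image iso_def hom_nat_pow)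
    also have "\<dots> = (\<lambda>y. y [^]\<^bsub>H\<^esub> k) ` h ` carrier G"
      by (simp add: image_image)
    also have "\<dots> = powers H k"
      using h by (simp add: iso_def bij_betw_def)
    finally show ?thesis .
  qed
  ultimately show ?thesis
    by (auto intro: is_isoI)
qed

lemma (in comm_group) ex_nat_powers_iso:
  assumes fin: "finite (carrier G)"
  obtains H :: "nat monoid" and N :: nat
  where "comm_group H" "finite (carrier H)" "N > 0" "\<forall>x\<in>carrier H. x [^]\<^bsub>H\<^esub> N = \<one>\<^bsub>H\<^esub>"
    "G \<cong> H\<lparr>carrier := powers H (\<Prod>(prime_factors N))\<rparr>"
proof -
  define n where "n = order G"
  have n: "n > 0"
    unfolding n_def order_def using fin card_gt_0_iff by blast
  have exn: "\<forall>x\<in>carrier G. x [^] n = \<one>"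
    unfolding n_def using pow_order_eq_1 by blast
  define r where "r = \<Prod>(prime_factors n)"
  have r: "r > 0"
    unfolding r_def by (simp add: prod_pos prime_gt_0_nat in_prime_factors_imp_prime)
  obtain H' :: "('a \<Rightarrow> int) set monoid" where H': "comm_group H'" "finite (carrier H')"
    and exH': "\<forall>x\<in>carrier H'. x [^]\<^bsub>H'\<^esub> (n * r) = \<one>\<^bsub>H'\<^esub>"
    and G_iso: "G \<cong> H'\<lparr>carrier := powers H' r\<rparr>"
    using ex_powers_iso[OF fin n exn r] by blast
  interpret H': comm_group H' by (rule H'(1))
  obtain H :: "nat monoid" and h where h: "h \<in> iso H' H" and H: "group H"
    using ex_iso_nat_monoid[OF H'.is_group H'(2)] by blast
  interpret h: group_hom H' H h
    using h H by (simp add: group_hom_def group_hom_axioms_def iso_def H'.is_group)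
  show thesis
  proof
    show "comm_group H"
      using H'.iso_imp_comm_group[OF is_isoI[OF h]] H by (simp add: group.is_monoid)
    show "finite (carrier H)"
      using H'(2) iso_finite[OF is_isoI[OF h]] by simp
    show "\<forall>x\<in>carrier H. x [^]\<^bsub>H\<^esub> (n * r) = \<one>\<^bsub>H\<^esub>"
      using h.nat_pow_eq_one_image[OF _ exH'] h by (simp add: iso_def bij_betw_def)
    show "G \<cong> H\<lparr>carrier := powers H (\<Prod>(prime_factors (n * r)))\<rparr>"
      using G_iso H'.iso_powers[OF h H] iso_trans prime_factors_mult_prod_prime_factors[OF n]
      unfolding r_def by auto
  qed (use n r in simp)
qed

section \<open>Complete \<open>\<Phi>\<close>-realisability\<close>

lemma image_Int_vimage_eq: "B \<subseteq> f ` A \<Longrightarrow> f ` (A \<inter> f -` B) = B"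
  by auto

context
  fixes G :: "('a, 'b) monoid_scheme" and H :: "('c, 'd) monoid_scheme" and f \<iota>
  assumes G: "group G" and H: "group H" and f: "f \<in> hom H H"
    and \<iota>: "\<iota> \<in> iso G (H\<lparr>carrier := f ` carrier H\<rparr>)"
begin

lemma ex_subgroup_iso_image:
  assumes G1: "subgroup G1 G"
  shows "\<exists>K. subgroup K H \<and> G\<lparr>carrier := G1\<rparr> \<cong> H\<lparr>carrier := f ` K\<rparr>"
proof -
  interpret H: group H by (rule H)
  interpret f: group_hom H H f
    using f by (simp add: group_hom_def group_hom_axioms_def H.is_group)
  interpret \<iota>: group_hom G H \<iota>
    using \<iota> f.img_is_subgroup[THEN subgroup.subset] G H
    by (fastforce simp: group_hom_def group_hom_axioms_def iso_def hom_def)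
  define K where "K = carrier H \<inter> f -` (\<iota> ` G1)"
  have "subgroup K H"
    unfolding K_def by (rule f.subgroup_vimage[OF \<iota>.subgroup_img_is_subgroup[OF G1]])
  moreover have "\<iota> ` G1 \<subseteq> f ` carrier H"
    using \<iota> subgroup.subset[OF G1] by (auto simp: iso_def hom_def)
  then have "f ` K = \<iota> ` G1"
    unfolding K_def by (rule image_Int_vimage_eq)
  then have "G\<lparr>carrier := G1\<rparr> \<cong> H\<lparr>carrier := f ` K\<rparr>"
    using iso_restrict[OF \<iota> G H.subgroup_imp_group[OF f.img_is_subgroup] G1]
    by (auto intro: is_isoI)
  ultimately show ?thesis
    by blast
qed

lemma ex_subgroup_image_iso:
  assumes K: "subgroup K H"
  shows "\<exists>G1. subgroup G1 G \<and> H\<lparr>carrier := f ` K\<rparr> \<cong> G\<lparr>carrier := G1\<rparr>"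
proof -
  interpret G: group G by (rule G)
  interpret H: group H by (rule H)
  interpret f: group_hom H H f
    using f by (simp add: group_hom_def group_hom_axioms_def H.is_group)
  have HP: "group (H\<lparr>carrier := f ` carrier H\<rparr>)"
    by (rule H.subgroup_imp_group[OF f.img_is_subgroup])
  define \<psi> where "\<psi> = inv_into (carrier G) \<iota>"
  have \<psi>: "\<psi> \<in> iso (H\<lparr>carrier := f ` carrier H\<rparr>) G"
    unfolding \<psi>_def by (rule G.iso_set_sym[OF \<iota>])
  have S: "subgroup (f ` K) (H\<lparr>carrier := f ` carrier H\<rparr>)"
    using H.subgroup_incl[OF f.subgroup_img_is_subgroup[OF K] f.img_is_subgroup] subgroup.subset[OF K]
    by blast
  have "subgroup (\<psi> ` f ` K) G"
    by (rule subgroup.iso_subgroup[OF S HP G \<psi>])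
  moreover have "H\<lparr>carrier := f ` K\<rparr> \<cong> G\<lparr>carrier := \<psi> ` f ` K\<rparr>"
    using iso_restrict[OF \<psi> HP G S] by (auto intro: is_isoI)
  ultimately show ?thesis
    by blast
qed

end

lemma completely_Phi_realisableI:
  fixes G :: "('a, 'b) monoid_scheme" and H :: "nat monoid"
  assumes G: "group G" and H: "group H" "finite (carrier H)" and f: "f \<in> hom H H"
    and frattini_eq: "\<And>K. subgroup K H \<Longrightarrow> frattini (H\<lparr>carrier := K\<rparr>) = f ` K"
    and iso: "G \<cong> H\<lparr>carrier := f ` carrier H\<rparr>"
  shows "completely_Phi_realisable G"
proof -
  obtain \<iota> where \<iota>: "\<iota> \<in> iso G (H\<lparr>carrier := f ` carrier H\<rparr>)"
    using iso unfolding is_iso_def by blast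
  have frattini_group_eq: "frattini_group (H\<lparr>carrier := K\<rparr>) = H\<lparr>carrier := f ` K\<rparr>"
    if "subgroup K H" for K
    using frattini_eq[OF that] by (simp add: frattini_group_def)
  have "G \<cong> frattini_group H"
    using iso frattini_group_eq[OF group.subgroup_self[OF H(1)]] by simp
  moreover have "\<exists>K. subgroup K H \<and> G\<lparr>carrier := G1\<rparr> \<cong> frattini_group (H\<lparr>carrier := K\<rparr>)"
    if "subgroup G1 G" for G1
    using ex_subgroup_iso_image[OF G H(1) f \<iota> that] frattini_group_eq by auto
  moreover have "\<exists>G1. subgroup G1 G \<and> frattini_group (H\<lparr>carrier := K\<rparr>) \<cong> G\<lparr>carrier := G1\<rparr>"
    if "subgroup K H" for K
    using ex_subgroup_image_iso[OF G H(1) f \<iota> that] frattini_group_eq[OF that] by auto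
  ultimately show ?thesis
    unfolding completely_Phi_realisable_def using H by blast
qed

theorem theorem3p3:
  fixes G :: "('a, 'b) monoid_scheme"
  assumes "comm_group G" and "finite (carrier G)"
  shows "completely_Phi_realisable G"
proof -
  interpret G: comm_group G by (rule assms(1))
  obtain H :: "nat monoid" and N where H: "comm_group H" "finite (carrier H)"
    and N: "N > 0" and exH: "\<forall>x\<in>carrier H. x [^]\<^bsub>H\<^esub> N = \<one>\<^bsub>H\<^esub>"
    and G_iso: "G \<cong> H\<lparr>carrier := powers H (\<Prod>(prime_factors N))\<rparr>"
    using G.ex_nat_powers_iso[OF assms(2)] by blast
  show ?thesis
  proof (rule completely_Phi_realisableI[OF G.is_group comm_group.axioms(2)[OF H(1)] H(2) _ _ G_iso])
    show "(\<lambda>x. x [^]\<^bsub>H\<^esub> (\<Prod>(prime_factors N))) \<in> hom H H"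
      using group_hom.homh[OF comm_group.group_hom_nat_pow[OF H(1)]] .
    show "frattini (H\<lparr>carrier := K\<rparr>) = (\<lambda>x. x [^]\<^bsub>H\<^esub> (\<Prod>(prime_factors N))) ` K"
      if "subgroup K H" for K
      by (rule comm_group.frattini_subgroup_eq[OF H N exH that])
  qed
qed

end
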